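(* Each of the following third-order recursions is periodic with period $12$: $$z_n = \frac{-1 - 2 z_{n-3} + 2 z_{n-2} - 2 z_{n-1}}{2 z_{n-3}},$$ $$z_n = \frac{(1+\sqrt3\, i) z_{n-3} + 2 z_{n-2} + (1-\sqrt3\, i) z_{n-1} + (-1-\sqrt3\, i)}{2 z_{n-3}},$$ $$z_n = \frac{(1-\sqrt3\, i) z_{n-3} + 2 z_{n-2} + (1+\sqrt3\, i) z_{n-1} + (-1+\sqrt3\, i)}{2 z_{n-3}}.$$ That is, for the sequence defined from indeterminates $z_1,z_2,z_3$ one has $z_{13}=z_1$, $z_{14}=z_2$, $z_{15}=z_3$ in $\mathbb{C}(z_1,z_2,z_3)$, hence $z_{n+12}=z_n$ for all $n\ge1$.
   Context: Let $z_1,z_2,z_3$ be independent indeterminates over $\mathbb{C}$ and define $z_n\in\mathbb{C}(z_1,z_2,z_3)$ for $n\ge4$ by the given recursion. A third-order recursion is periodic with period $k$ if all iterates are well-defined elements of $\mathbb{C}(z_1,z_2,z_3)$ (no denominator identically zero) and $z_{k+1}=z_1$, $z_{k+2}=z_2$, $z_{k+3}=z_3$; equivalently every complex sequence satisfying the recursion with no vanishing denominator satisfies $z_{n+k}=z_n$ for all $n$. *)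

theory Defs
  imports Complex_Main
begin

text \<open>A third-order recursion z_n = N(z_{n-3},z_{n-2},z_{n-1}) / D(z_{n-3},z_{n-2},z_{n-1}),
  sequences indexed from 1 (z 1, z 2, z 3 are the initial values).\<close>

definition rec3_solution ::
  "(complex \<Rightarrow> complex \<Rightarrow> complex \<Rightarrow> complex) \<Rightarrow>
   (complex \<Rightarrow> complex \<Rightarrow> complex \<Rightarrow> complex) \<Rightarrow> (nat \<Rightarrow> complex) \<Rightarrow> bool" where
  "rec3_solution N D z \<longleftrightarrow>
     (\<forall>n\<ge>4. D (z (n-3)) (z (n-2)) (z (n-1)) \<noteq> 0 \<and>
             z n = N (z (n-3)) (z (n-2)) (z (n-1)) / D (z (n-3)) (z (n-2)) (z (n-1)))"

text \<open>Periodicity with period k: all iterates are well defined as rational functions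
  (equivalently, some complex solution with no vanishing denominator exists, since the
  denominators are then nonzero rational functions and vice versa), and every such
  complex solution satisfies z (n+k) = z n for all n >= 1.\<close>

definition rec3_periodic ::
  "(complex \<Rightarrow> complex \<Rightarrow> complex \<Rightarrow> complex) \<Rightarrow>
   (complex \<Rightarrow> complex \<Rightarrow> complex \<Rightarrow> complex) \<Rightarrow> nat \<Rightarrow> bool" where
  "rec3_periodic N D k \<longleftrightarrow>
     (\<exists>z. rec3_solution N D z) \<and>
     (\<forall>z. rec3_solution N D z \<longrightarrow> (\<forall>n\<ge>1. z (n + k) = z n))"

end

theory Submission
  imports Defs
begin

(* Each recursion has the form x(n+3) x(n) = alpha x(n) + beta x(n+1) + gamma x(n+2) + delta.
   The substitution x(n) = tau(n+5) / (tau(n) tau(n+1) tau(n+2)), with tau(0) = ... = tau(4) = 1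
   and tau(5), tau(6), tau(7) the initial values, turns it into a recursion for tau without
   division, so every tau(n) is a polynomial in the initial values.  For the three recursions
   of the theorem tau(15), tau(16), tau(17) acquire the factors tau(12), tau(12) tau(13) and
   tau(12) tau(13) tau(14) respectively, and finally tau(17) = x(0) tau(12) tau(13) tau(14),
   which says x(12) = x(0).  The second and third recursions are the two specialisations of
   one recursion with coefficients in Z[w], w^2 + w + 1 = 0.  A constant sequence at a fixed
   point shows that solutions exist. *)

fun tau :: "'a::comm_ring_1 \<Rightarrow> 'a \<Rightarrow> 'a \<Rightarrow> 'a \<Rightarrow> 'a \<Rightarrow> 'a \<Rightarrow> 'a \<Rightarrow> nat \<Rightarrow> 'a" where
  "tau \<alpha> \<beta> \<gamma> \<delta> a b c n =
     (if n < 5 then 1 else if n = 5 then a else if n = 6 then b else if n = 7 then c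
      else \<alpha> * tau \<alpha> \<beta> \<gamma> \<delta> a b c (n - 5) * tau \<alpha> \<beta> \<gamma> \<delta> a b c (n - 4) * tau \<alpha> \<beta> \<gamma> \<delta> a b c (n - 3)
         + \<beta> * tau \<alpha> \<beta> \<gamma> \<delta> a b c (n - 8) * tau \<alpha> \<beta> \<gamma> \<delta> a b c (n - 4) * tau \<alpha> \<beta> \<gamma> \<delta> a b c (n - 2)
         + \<gamma> * tau \<alpha> \<beta> \<gamma> \<delta> a b c (n - 8) * tau \<alpha> \<beta> \<gamma> \<delta> a b c (n - 7) * tau \<alpha> \<beta> \<gamma> \<delta> a b c (n - 1)
         + \<delta> * tau \<alpha> \<beta> \<gamma> \<delta> a b c (n - 8) * tau \<alpha> \<beta> \<gamma> \<delta> a b c (n - 7) * tau \<alpha> \<beta> \<gamma> \<delta> a b c (n - 6)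
             * tau \<alpha> \<beta> \<gamma> \<delta> a b c (n - 5) * tau \<alpha> \<beta> \<gamma> \<delta> a b c (n - 4))"

declare tau.simps [simp del]

lemma tau_init:
  "n < 5 \<Longrightarrow> tau \<alpha> \<beta> \<gamma> \<delta> a b c n = 1"
  "tau \<alpha> \<beta> \<gamma> \<delta> a b c 5 = a" "tau \<alpha> \<beta> \<gamma> \<delta> a b c 6 = b" "tau \<alpha> \<beta> \<gamma> \<delta> a b c 7 = c"
  by (simp_all add: tau.simps)

lemma tau_rec:
  "tau \<alpha> \<beta> \<gamma> \<delta> a b c (n + 8) =
     \<alpha> * tau \<alpha> \<beta> \<gamma> \<delta> a b c (n + 3) * tau \<alpha> \<beta> \<gamma> \<delta> a b c (n + 4) * tau \<alpha> \<beta> \<gamma> \<delta> a b c (n + 5)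
   + \<beta> * tau \<alpha> \<beta> \<gamma> \<delta> a b c n * tau \<alpha> \<beta> \<gamma> \<delta> a b c (n + 4) * tau \<alpha> \<beta> \<gamma> \<delta> a b c (n + 6)
   + \<gamma> * tau \<alpha> \<beta> \<gamma> \<delta> a b c n * tau \<alpha> \<beta> \<gamma> \<delta> a b c (n + 1) * tau \<alpha> \<beta> \<gamma> \<delta> a b c (n + 7)
   + \<delta> * tau \<alpha> \<beta> \<gamma> \<delta> a b c n * tau \<alpha> \<beta> \<gamma> \<delta> a b c (n + 1) * tau \<alpha> \<beta> \<gamma> \<delta> a b c (n + 2)
       * tau \<alpha> \<beta> \<gamma> \<delta> a b c (n + 3) * tau \<alpha> \<beta> \<gamma> \<delta> a b c (n + 4)"
  by (subst tau.simps) (simp add: numeral_eq_Suc)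

lemma tau_substitution_step:
  fixes t0 t1 t2 t3 t4 t5 t6 t7 :: "'a::field"
  assumes "t0 \<noteq> 0" "t1 \<noteq> 0" "t2 \<noteq> 0" "t3 \<noteq> 0" "t4 \<noteq> 0" "t5 \<noteq> 0"
  shows "(\<alpha> * (t5 / (t0 * t1 * t2)) + \<beta> * (t6 / (t1 * t2 * t3)) + \<gamma> * (t7 / (t2 * t3 * t4)) + \<delta>)
           / (t5 / (t0 * t1 * t2))
         = (\<alpha> * t3 * t4 * t5 + \<beta> * t0 * t4 * t6 + \<gamma> * t0 * t1 * t7 + \<delta> * t0 * t1 * t2 * t3 * t4)
           / (t3 * t4 * t5)"
  using assms by (simp add: field_simps)

lemma linear_recurrence_eq_tau_quotient:
  fixes x :: "nat \<Rightarrow> 'a::field"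
  assumes rec: "\<And>n. x (n + 3) * x n = \<alpha> * x n + \<beta> * x (n + 1) + \<gamma> * x (n + 2) + \<delta>"
    and nz: "\<And>n. x n \<noteq> 0"
  defines "T \<equiv> tau \<alpha> \<beta> \<gamma> \<delta> (x 0) (x 1) (x 2)"
  shows "x n = T (n + 5) / (T n * T (n + 1) * T (n + 2))"
proof (induction n rule: less_induct)
  case (less n)
  have T_nz: "T j \<noteq> 0" if j_lt: "j < n + 5" for j
  proof (cases "j < 5")
    case True
    then show ?thesis by (simp add: T_def tau_init)
  next
    case False
    then obtain k where j: "j = k + 5" and "k < n"
      using j_lt by (intro that[of "j - 5"]) auto
    have "x k = T j / (T k * T (k + 1) * T (k + 2))"
      using less.IH[OF \<open>k < n\<close>] j by simp
    with nz[of k] show ?thesis by auto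
  qed
  show ?case
  proof (cases "n < 3")
    case True
    then have "n = 0 \<or> n = 1 \<or> n = 2" by auto
    then show ?thesis by (auto simp: T_def tau_init)
  next
    case False
    then obtain m where n: "n = m + 3"
      by (intro that[of "n - 3"]) auto
    have x0: "x m = T (m + 5) / (T m * T (m + 1) * T (m + 2))"
      using less.IH[of m] by (simp add: n)
    have x1: "x (m + 1) = T (m + 6) / (T (m + 1) * T (m + 2) * T (m + 3))"
      using less.IH[of "m + 1"] by (simp add: n numeral_eq_Suc)
    have x2: "x (m + 2) = T (m + 7) / (T (m + 2) * T (m + 3) * T (m + 4))"
      using less.IH[of "m + 2"] by (simp add: n numeral_eq_Suc)
    have "x n = (\<alpha> * x m + \<beta> * x (m + 1) + \<gamma> * x (m + 2) + \<delta>) / x m"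
      using rec[of m] nz[of m] by (simp add: n eq_divide_eq)
    also have "\<dots> = T (m + 8) / (T (m + 3) * T (m + 4) * T (m + 5))"
      unfolding x0 x1 x2 T_def tau_rec
      by (rule tau_substitution_step; fold T_def; rule T_nz; simp add: n)
    finally show ?thesis by (simp add: n numeral_eq_Suc)
  qed
qed

lemma linear_recurrence_returns:
  fixes x :: "nat \<Rightarrow> 'a::field"
  assumes rec: "\<And>n. x (n + 3) * x n = \<alpha> * x n + \<beta> * x (n + 1) + \<gamma> * x (n + 2) + \<delta>"
    and nz: "\<And>n. x n \<noteq> 0"
    and tau_return: "tau \<alpha> \<beta> \<gamma> \<delta> (x 0) (x 1) (x 2) (k + 5)
      = x 0 * tau \<alpha> \<beta> \<gamma> \<delta> (x 0) (x 1) (x 2) k * tau \<alpha> \<beta> \<gamma> \<delta> (x 0) (x 1) (x 2) (k + 1)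
          * tau \<alpha> \<beta> \<gamma> \<delta> (x 0) (x 1) (x 2) (k + 2)"
  shows "x k = x 0"
proof -
  define T where "T = tau \<alpha> \<beta> \<gamma> \<delta> (x 0) (x 1) (x 2)"
  have xk: "x k = T (k + 5) / (T k * T (k + 1) * T (k + 2))"
    unfolding T_def by (rule linear_recurrence_eq_tau_quotient[OF rec nz])
  with nz[of k] have "T k * T (k + 1) * T (k + 2) \<noteq> 0"
    by auto
  then show ?thesis
    using xk tau_return by (simp add: T_def)
qed

lemma rec3_solution_shift:
  assumes "rec3_solution N D z"
  shows "rec3_solution N D (\<lambda>n. z (n + k))"
  unfolding rec3_solution_def
proof (intro allI impI)
  fix n :: nat
  assume "4 \<le> n"
  then have "D (z (n + k - 3)) (z (n + k - 2)) (z (n + k - 1)) \<noteq> 0 \<and>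
      z (n + k) = N (z (n + k - 3)) (z (n + k - 2)) (z (n + k - 1))
        / D (z (n + k - 3)) (z (n + k - 2)) (z (n + k - 1))"
    using assms unfolding rec3_solution_def by simp
  moreover have "n + k - 3 = n - 3 + k" "n + k - 2 = n - 2 + k" "n + k - 1 = n - 1 + k"
    using \<open>4 \<le> n\<close> by auto
  ultimately show "D (z (n - 3 + k)) (z (n - 2 + k)) (z (n - 1 + k)) \<noteq> 0 \<and>
      z (n + k) = N (z (n - 3 + k)) (z (n - 2 + k)) (z (n - 1 + k))
        / D (z (n - 3 + k)) (z (n - 2 + k)) (z (n - 1 + k))"
    by simp
qed

lemma rec3_periodicI:
  assumes "rec3_solution N D z\<^sub>0"
    and "\<And>z. rec3_solution N D z \<Longrightarrow> z (k + 1) = z 1"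
  shows "rec3_periodic N D k"
  unfolding rec3_periodic_def
proof (intro conjI allI impI)
  show "\<exists>z. rec3_solution N D z"
    using assms(1) by blast
next
  fix z and n :: nat
  assume "rec3_solution N D z" and "1 \<le> n"
  have "z (k + 1 + (n - 1)) = z (1 + (n - 1))"
    by (rule assms(2) [OF rec3_solution_shift [OF \<open>rec3_solution N D z\<close>]])
  with \<open>1 \<le> n\<close> show "z (n + k) = z n"
    by (simp add: add.commute)
qed

lemma rec3_solution_linear:
  assumes "rec3_solution N (\<lambda>a b c. 2 * a) z"
    and "\<And>a b c. N a b c = 2 * (\<alpha> * a + \<beta> * b + \<gamma> * c + \<delta>)"
  shows "z (n + 1) \<noteq> 0"
    and "z (n + 4) * z (n + 1) = \<alpha> * z (n + 1) + \<beta> * z (n + 2) + \<gamma> * z (n + 3) + \<delta>"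
proof -
  from assms(1) have "2 * z (n + 4 - 3) \<noteq> 0 \<and>
      z (n + 4) = N (z (n + 4 - 3)) (z (n + 4 - 2)) (z (n + 4 - 1)) / (2 * z (n + 4 - 3))"
    unfolding rec3_solution_def by (meson le_add2)
  then show "z (n + 1) \<noteq> 0"
    and "z (n + 4) * z (n + 1) = \<alpha> * z (n + 1) + \<beta> * z (n + 2) + \<gamma> * z (n + 3) + \<delta>"
    by (simp_all add: assms(2) field_simps numeral_eq_Suc)
qed

lemma rec3_solution_linear_exists:
  assumes N: "\<And>a b c. N a b c = 2 * (\<alpha> * a + \<beta> * b + \<gamma> * c + \<delta>)" and "\<delta> \<noteq> 0"
  shows "\<exists>z. rec3_solution N (\<lambda>a b c. 2 * a) z"
proof -
  define s where "s = \<alpha> + \<beta> + \<gamma>"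
  define c where "c = (s + csqrt (s\<^sup>2 + 4 * \<delta>)) / 2"
  have c2: "c * c = s * c + \<delta>"
    unfolding c_def
    by (simp add: power2_eq_square field_simps) (simp add: power2_eq_square [symmetric])
  with \<open>\<delta> \<noteq> 0\<close> have "c \<noteq> 0"
    by auto
  have "N c c c = 2 * (s * c + \<delta>)"
    by (simp add: N s_def algebra_simps)
  also have "\<dots> = c * (2 * c)"
    by (simp add: c2 [symmetric])
  finally have "rec3_solution N (\<lambda>a b c. 2 * a) (\<lambda>_. c)"
    unfolding rec3_solution_def using \<open>c \<noteq> 0\<close> by (simp add: eq_divide_eq)
  then show ?thesis
    by blast
qed

lemma rec3_periodic_linear:
  assumes N: "\<And>a b c. N a b c = 2 * (\<alpha> * a + \<beta> * b + \<gamma> * c + \<delta>)" and "\<delta> \<noteq> 0"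
    and tau_return: "\<And>a b c. tau \<alpha> \<beta> \<gamma> \<delta> a b c (k + 5)
      = a * tau \<alpha> \<beta> \<gamma> \<delta> a b c k * tau \<alpha> \<beta> \<gamma> \<delta> a b c (k + 1) * tau \<alpha> \<beta> \<gamma> \<delta> a b c (k + 2)"
  shows "rec3_periodic N (\<lambda>a b c. 2 * a) k"
proof -
  obtain z\<^sub>0 where "rec3_solution N (\<lambda>a b c. 2 * a) z\<^sub>0"
    using rec3_solution_linear_exists[OF N \<open>\<delta> \<noteq> 0\<close>] by blast
  then show ?thesis
  proof (rule rec3_periodicI)
    fix z
    assume z: "rec3_solution N (\<lambda>a b c. 2 * a) z"
    have "z (k + 1) = z (0 + 1)"
    proof (rule linear_recurrence_returns[where x = "\<lambda>n. z (n + 1)"])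
      show "z (n + 3 + 1) * z (n + 1)
          = \<alpha> * z (n + 1) + \<beta> * z (n + 1 + 1) + \<gamma> * z (n + 2 + 1) + \<delta>" for n
        using rec3_solution_linear(2)[OF z N, of n] by (simp add: numeral_eq_Suc)
      show "z (n + 1) \<noteq> 0" for n
        using rec3_solution_linear(1)[OF z N] .
    qed (rule tau_return)
    then show "z (k + 1) = z 1"
      by simp
  qed
qed

(* Integer normalisations of tau(8), ..., tau(14) for the first recursion and the two new
   factors of tau(15) and tau(16); delta = -1/2 makes tau itself have dyadic coefficients. *)

definition A8 :: "complex \<Rightarrow> complex \<Rightarrow> complex \<Rightarrow> complex" where
  "A8 a b c = - 2 * a + 2 * b - 2 * c - 1"

definition A9 :: "complex \<Rightarrow> complex \<Rightarrow> complex \<Rightarrow> complex" where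
  "A9 a b c = - 2 * a * b + 2 * a * c + a - 2 * b + 2 * c + 1"

definition A10 :: "complex \<Rightarrow> complex \<Rightarrow> complex \<Rightarrow> complex" where
  "A10 a b c = - 2 * a * b * c - a * b - 2 * a * c + 2 * b^2 - 2 * b * c - a + b - 2 * c - 1"

definition A11 :: "complex \<Rightarrow> complex \<Rightarrow> complex \<Rightarrow> complex" where
  "A11 a b c = a * b * c + 2 * a * c^2 - 2 * b^2 * c + 2 * b * c^2 + a * b + 3 * a * c - 2 * b^2
    + b * c + 2 * c^2 + a - b + 3 * c + 1"

definition A12 :: "complex \<Rightarrow> complex \<Rightarrow> complex \<Rightarrow> complex" where
  "A12 a b c = 2 * a * b^2 * c - 6 * a * b * c^2 + 4 * a * c^3 - 2 * a * b^2 - 5 * a * b * c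
    + 8 * a * c^2 + 4 * b^3 - 4 * b^2 * c - 4 * b * c^2 + 4 * c^3 - a * b + 5 * a * c - 8 * b * c
    + 8 * c^2 + a - 3 * b + 5 * c + 1"

definition A13 :: "complex \<Rightarrow> complex \<Rightarrow> complex \<Rightarrow> complex" where
  "A13 a b c = - 8 * a^3 * b * c^2 + 8 * a^3 * c^3 + 4 * a^2 * b^2 * c^2 - 4 * a^2 * b * c^3
    - 4 * a^3 * b * c + 8 * a^3 * c^2 + 14 * a^2 * b^2 * c - 24 * a^2 * b * c^2 + 8 * a^2 * c^3
    - 12 * a * b^3 * c + 24 * a * b^2 * c^2 - 12 * a * b * c^3 + 2 * a^3 * c + 2 * a^2 * b^2
    - 9 * a^2 * b * c + 4 * a^2 * c^2 - 8 * a * b^3 + 20 * a * b^2 * c - 4 * a * b * c^2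
    - 8 * a * c^3 + 8 * b^4 - 24 * b^3 * c + 24 * b^2 * c^2 - 8 * b * c^3 + a^2 * b - 2 * a^2 * c
    + 13 * a * b * c - 16 * a * c^2 - 4 * b^3 + 12 * b * c^2 - 8 * c^3 - a^2 + 6 * a * b
    - 10 * a * c - 6 * b^2 + 18 * b * c - 12 * c^2 - 2 * a + 5 * b - 6 * c - 1"

definition A14 :: "complex \<Rightarrow> complex \<Rightarrow> complex \<Rightarrow> complex" where
  "A14 a b c = - 8 * a^3 * b^3 * c - 16 * a^3 * b^2 * c^2 + 8 * a^3 * b * c^3 + 16 * a^3 * c^4
    + 24 * a^2 * b^4 * c - 12 * a^2 * b^3 * c^2 - 36 * a^2 * b^2 * c^3 + 24 * a^2 * b * c^4
    - 16 * a * b^5 * c + 40 * a * b^4 * c^2 - 32 * a * b^3 * c^3 + 8 * a * b^2 * c^4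
    - 4 * a^3 * b^3 - 20 * a^3 * b^2 * c + 8 * a^3 * b * c^2 + 40 * a^3 * c^3 + 20 * a^2 * b^4
    + 22 * a^2 * b^3 * c - 116 * a^2 * b^2 * c^2 + 20 * a^2 * b * c^3 + 48 * a^2 * c^4
    - 32 * a * b^5 + 56 * a * b^4 * c + 40 * a * b^3 * c^2 - 112 * a * b^2 * c^3
    + 48 * a * b * c^4 + 16 * b^6 - 56 * b^5 * c + 72 * b^4 * c^2 - 40 * b^3 * c^3 + 8 * b^2 * c^4
    - 6 * a^3 * b^2 + 2 * a^3 * b * c + 36 * a^3 * c^2 + 18 * a^2 * b^3 - 85 * a^2 * b^2 * c
    - 38 * a^2 * b * c^2 + 120 * a^2 * c^3 - 8 * a * b^4 + 132 * a * b^3 * c - 190 * a * b^2 * c^2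
    + 16 * a * b * c^3 + 48 * a * c^4 - 8 * b^5 - 12 * b^4 * c + 72 * b^3 * c^2 - 76 * b^2 * c^3
    + 24 * b * c^4 + 14 * a^3 * c - 18 * a^2 * b^2 - 41 * a^2 * b * c + 108 * a^2 * c^2
    + 48 * a * b^3 - 70 * a * b^2 * c - 100 * a * b * c^2 + 120 * a * c^3 - 28 * b^4
    + 98 * b^3 * c - 90 * b^2 * c^2 + 4 * b * c^3 + 16 * c^4 + 2 * a^3 - 10 * a^2 * b
    + 42 * a^2 * c - 2 * a * b^2 - 88 * a * b * c + 108 * a * c^2 + 18 * b^3 - 5 * b^2 * c
    - 54 * b * c^2 + 40 * c^3 + 6 * a^2 - 20 * a * b + 42 * a * c + 10 * b^2 - 45 * b * c
    + 36 * c^2 + 6 * a - 10 * b + 14 * c + 2"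

definition A15 :: "complex \<Rightarrow> complex \<Rightarrow> complex \<Rightarrow> complex" where
  "A15 a b c = 4 * a^3 * b * c^2 + 8 * a^3 * c^3 - 8 * a^2 * b^2 * c^2 + 8 * a^2 * b * c^3
    + 2 * a^3 * b * c + 8 * a^3 * c^2 - 4 * a^2 * b^2 * c + 6 * a^2 * b * c^2 + 20 * a^2 * c^3
    - 12 * a * b^2 * c^2 + 12 * a * b * c^3 + 2 * a^3 * c + 2 * a^2 * b^2 + 9 * a^2 * b * c
    + 28 * a^2 * c^2 - 8 * a * b^3 - 16 * a * b^2 * c + 14 * a * b * c^2 + 16 * a * c^3 + 8 * b^4
    - 12 * b^3 * c + 4 * b * c^3 + 4 * a^2 * b + 13 * a^2 * c - 12 * a * b^2 + 4 * a * b * c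
    + 32 * a * c^2 + 8 * b^3 - 24 * b^2 * c + 12 * b * c^2 + 4 * c^3 + 2 * a^2 + 20 * a * c
    - 6 * b^2 - 3 * b * c + 12 * c^2 + 4 * a - 4 * b + 9 * c + 2"

definition A16 :: "complex \<Rightarrow> complex \<Rightarrow> complex \<Rightarrow> complex" where
  "A16 a b c = 2 * a^2 * b + 4 * a^2 * c - 6 * a * b^2 + 4 * b^3 - 4 * b^2 * c + 2 * a^2
    - 5 * a * b + 2 * a * c + 4 * b^2 - 6 * b * c + a - b - 2 * c - 1"

lemmas A_defs = A8_def A9_def A10_def A11_def A12_def A13_def A14_def A15_def A16_def

definition tauA :: "complex \<Rightarrow> complex \<Rightarrow> complex \<Rightarrow> nat \<Rightarrow> complex" where
  "tauA a b c = tau (-1) 1 (-1) (-1/2) a b c"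

lemma tauA_init:
  "n < 5 \<Longrightarrow> tauA a b c n = 1" "tauA a b c 5 = a" "tauA a b c 6 = b" "tauA a b c 7 = c"
  unfolding tauA_def by (simp_all add: tau_init)

lemma tauA_rec:
  "tauA a b c (n + 8) = - tauA a b c (n + 3) * tauA a b c (n + 4) * tauA a b c (n + 5)
     + tauA a b c n * tauA a b c (n + 4) * tauA a b c (n + 6)
     - tauA a b c n * tauA a b c (n + 1) * tauA a b c (n + 7)
     - tauA a b c n * tauA a b c (n + 1) * tauA a b c (n + 2)
         * tauA a b c (n + 3) * tauA a b c (n + 4) / 2"
  unfolding tauA_def tau_rec by simp

lemma tauA_values:
  "tauA a b c 8 = A8 a b c / 2" "tauA a b c 9 = A9 a b c / 2" "tauA a b c 10 = A10 a b c / 2"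
  "tauA a b c 11 = A11 a b c / 2" "tauA a b c 12 = A12 a b c / 4" "tauA a b c 13 = A13 a b c / 8"
  "tauA a b c 14 = A14 a b c / 16"
proof -
  let ?T = "tauA a b c"
  show T8: "?T 8 = A8 a b c / 2"
    by (simp add: tauA_rec [of _ _ _ 0, simplified] tauA_init field_simps) (unfold A_defs, algebra)
  show T9: "?T 9 = A9 a b c / 2"
    by (simp add: tauA_rec [of _ _ _ 1, simplified] tauA_init T8 field_simps)
      (unfold A_defs, algebra)
  show T10: "?T 10 = A10 a b c / 2"
    by (simp add: tauA_rec [of _ _ _ 2, simplified] tauA_init T8 T9 field_simps)
      (unfold A_defs, algebra)
  show T11: "?T 11 = A11 a b c / 2"
    by (simp add: tauA_rec [of _ _ _ 3, simplified] tauA_init T8 T9 T10 field_simps)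
      (unfold A_defs, algebra)
  show T12: "?T 12 = A12 a b c / 4"
    by (simp add: tauA_rec [of _ _ _ 4, simplified] tauA_init T8 T9 T10 T11 field_simps)
      (unfold A_defs, algebra)
  show T13: "?T 13 = A13 a b c / 8"
    by (simp add: tauA_rec [of _ _ _ 5, simplified] tauA_init T8 T9 T10 T11 T12 field_simps)
      (unfold A_defs, algebra)
  show T14: "?T 14 = A14 a b c / 16"
    by (simp add: tauA_rec [of _ _ _ 6, simplified] tauA_init T8 T9 T10 T11 T12 T13 field_simps)
      (unfold A_defs, algebra)
qed

lemma tauA_return: "tauA a b c 17 = a * tauA a b c 12 * tauA a b c 13 * tauA a b c 14"
proof -
  let ?T = "tauA a b c"
  note T = tauA_values [of a b c]
  have T15: "?T 15 = A15 a b c * A12 a b c / 32"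
    by (simp add: tauA_rec [of _ _ _ 7, simplified] tauA_init T field_simps)
      (unfold A_defs, algebra)
  have "A16 a b c * A13 a b c = - 2 * A11 a b c * A13 a b c + A8 a b c * A14 a b c
      - A8 a b c * A9 a b c * A15 a b c - A8 a b c * A9 a b c * A10 a b c * A11 a b c"
    unfolding A_defs by algebra
  then have T16: "?T 16 = A16 a b c * A12 a b c * A13 a b c / 128"
    by (simp add: tauA_rec [of _ _ _ 8, simplified] T T15 field_simps) algebra
  have "a * A14 a b c = - A14 a b c + A9 a b c * A15 a b c
      - A9 a b c * A10 a b c * A16 a b c - A9 a b c * A10 a b c * A11 a b c"
    unfolding A_defs by algebra
  then have "?T 17 = a * A12 a b c * A13 a b c * A14 a b c / 512"
    by (simp add: tauA_rec [of _ _ _ 9, simplified] T T15 T16 field_simps) algebra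
  then show ?thesis
    by (simp add: T)
qed

lemma rec3_periodic_family_A:
  "rec3_periodic (\<lambda>a b c. -1 - 2 * a + 2 * b - 2 * c) (\<lambda>a b c. 2 * a) 12"
  by (rule rec3_periodic_linear [where \<alpha> = "-1" and \<beta> = 1 and \<gamma> = "-1" and \<delta> = "-1/2"])
    (simp_all add: tauA_return [unfolded tauA_def, simplified])

(* tau(8), ..., tau(14) and the new factor of tau(16) for the recursion with coefficients in
   Z[w]; here tau(15) = tau(13) tau(12). *)

definition B8 :: "complex \<Rightarrow> complex \<Rightarrow> complex \<Rightarrow> complex \<Rightarrow> complex" where
  "B8 w a b c = (1 + w) * a + b - w * c + (-1 - w)"

definition B9 :: "complex \<Rightarrow> complex \<Rightarrow> complex \<Rightarrow> complex \<Rightarrow> complex" where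
  "B9 w a b c = (1 + w) * a * b + a * c - w * a - w * b + (-1 - w) * c - 1"

definition B10 :: "complex \<Rightarrow> complex \<Rightarrow> complex \<Rightarrow> complex \<Rightarrow> complex" where
  "B10 w a b c = (1 + w) * a * b * c + a * b - w * a * c + b^2 - w * b * c + (-1 - w) * a + (-2
    - 2 * w) * b - c + w"

definition B11 :: "complex \<Rightarrow> complex \<Rightarrow> complex \<Rightarrow> complex \<Rightarrow> complex" where
  "B11 w a b c = (1 + w) * a * b * c + a * c^2 + (1 + w) * b^2 * c + b * c^2 - w * a * b + (-1
    - 2 * w) * a * c - w * b^2 + (-1 - 3 * w) * b * c + (-1 - w) * c^2 - a - 2 * b + (-1 + w) * c
    + (1 + w)"

definition B12 :: "complex \<Rightarrow> complex \<Rightarrow> complex \<Rightarrow> complex \<Rightarrow> complex" where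
  "B12 w a b c = (1 + w) * a * b^2 * c + (2 + w) * a * b * c^2 + a * c^3 + a * b^2 + (1
    - 3 * w) * a * b * c + (-1 - 3 * w) * a * c^2 + b^3 + (1 - 2 * w) * b^2 * c + (-1
    - 3 * w) * b * c^2 + (-1 - w) * c^3 + (-2 - 2 * w) * a * b + (-3 - w) * a * c + (-3
    - 3 * w) * b^2 + (-6 - 2 * w) * b * c + (-2 + w) * c^2 + w * a + 3 * w * b + (2 + 3 * w) * c
    + 1"

definition B13 :: "complex \<Rightarrow> complex \<Rightarrow> complex \<Rightarrow> complex \<Rightarrow> complex" where
  "B13 w a b c = (1 + w) * a^3 * b * c^2 + a^3 * c^3 + (1 + w) * a^2 * b^2 * c^2 + a^2 * b * c^3
    + a^3 * b * c - 2 * w * a^3 * c^2 + (3 + w) * a^2 * b^2 * c + (2 - 5 * w) * a^2 * b * c^2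
    + (-2 - 3 * w) * a^2 * c^3 + (2 + w) * a * b^3 * c + (2 - 2 * w) * a * b^2 * c^2 + (-1
    - 2 * w) * a * b * c^3 + (-1 - w) * a^3 * c + a^2 * b^2 + (-4 - 8 * w) * a^2 * b * c + (-7
    - 3 * w) * a^2 * c^2 + 2 * a * b^3 + (-3 - 11 * w) * a * b^2 * c + (-12 - 8 * w) * a * b * c^2
    + (-2 + w) * a * c^3 + b^4 - 3 * w * b^3 * c + (-3 - 3 * w) * b^2 * c^2 - b * c^3 + (-2
    - 2 * w) * a^2 * b + (-3 + 2 * w) * a^2 * c + (-6 - 6 * w) * a * b^2 + (-13
    + 3 * w) * a * b * c + (2 + 8 * w) * a * c^2 + (-4 - 4 * w) * b^3 - 9 * b^2 * c
    + 6 * w * b * c^2 + (1 + w) * c^3 + w * a^2 + 6 * w * a * b + (7 + 6 * w) * a * c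
    + 6 * w * b^2 + (9 + 9 * w) * b * c + 3 * c^2 + 2 * a + 4 * b - 3 * w * c + (-1 - w)"

definition B14 :: "complex \<Rightarrow> complex \<Rightarrow> complex \<Rightarrow> complex \<Rightarrow> complex" where
  "B14 w a b c = w * a^3 * b^3 * c + (2 + 3 * w) * a^3 * b^2 * c^2 + (3 + 2 * w) * a^3 * b * c^3
    + a^3 * c^4 + (1 + 2 * w) * a^2 * b^4 * c + (5 + 4 * w) * a^2 * b^3 * c^2 + (5
    + w) * a^2 * b^2 * c^3 + (1 - w) * a^2 * b * c^4 + (1 + w) * a * b^5 * c + (3
    + w) * a * b^4 * c^2 + (2 - w) * a * b^3 * c^3 - w * a * b^2 * c^4 + (1 + w) * a^3 * b^3 + (6
    + w) * a^3 * b^2 * c + (4 - 5 * w) * a^3 * b * c^2 + (-1 - 4 * w) * a^3 * c^3 + (3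
    + 2 * w) * a^2 * b^4 + (13 - 3 * w) * a^2 * b^3 * c + (4 - 21 * w) * a^2 * b^2 * c^2 + (-8
    - 17 * w) * a^2 * b * c^3 + (-3 - 3 * w) * a^2 * c^4 + (3 + w) * a * b^5 + (7
    - 8 * w) * a * b^4 * c + (-6 - 23 * w) * a * b^3 * c^2 + (-13 - 15 * w) * a * b^2 * c^3 + (-4
    - 2 * w) * a * b * c^4 + b^6 + (1 - 3 * w) * b^5 * c + (-3 - 6 * w) * b^4 * c^2 + (-4
    - 3 * w) * b^3 * c^3 - b^2 * c^4 - 3 * w * a^3 * b^2 + (-7 - 9 * w) * a^3 * b * c + (-6
    - 3 * w) * a^3 * c^2 + (-3 - 12 * w) * a^2 * b^3 + (-35 - 35 * w) * a^2 * b^2 * c + (-39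
    - 14 * w) * a^2 * b * c^2 + (-9 + 3 * w) * a^2 * c^3 + (-8 - 15 * w) * a * b^4 + (-48
    - 33 * w) * a * b^3 * c + (-49 - 3 * w) * a * b^2 * c^2 + (-12 + 13 * w) * a * b * c^3
    + 3 * w * a * c^4 + (-5 - 6 * w) * b^5 + (-19 - 8 * w) * b^4 * c + (-15 + 6 * w) * b^3 * c^2
    + (-1 + 9 * w) * b^2 * c^3 + (1 + 2 * w) * b * c^4 - 3 * a^3 * b + (-1 + 3 * w) * a^3 * c
    + (-15 + 3 * w) * a^2 * b^2 + (-5 + 30 * w) * a^2 * b * c + (9 + 18 * w) * a^2 * c^2 + (-18
    + 12 * w) * a * b^3 + (7 + 64 * w) * a * b^2 * c + (35 + 51 * w) * a * b * c^2 + (12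
    + 9 * w) * a * c^3 + (-5 + 10 * w) * b^4 + (14 + 36 * w) * b^3 * c + (27 + 27 * w) * b^2 * c^2
    + (11 + 5 * w) * b * c^3 + c^4 + (1 + w) * a^3 + (12 + 11 * w) * a^2 * b + (12
    + 3 * w) * a^2 * c + (30 + 22 * w) * a * b^2 + (43 + 4 * w) * a * b * c + (9
    - 9 * w) * a * c^2 + (20 + 10 * w) * b^3 + (28 - 6 * w) * b^2 * c + (6 - 15 * w) * b * c^2
    + (-1 - 4 * w) * c^3 - 3 * w * a^2 + (-2 - 15 * w) * a * b + (-9 - 12 * w) * a * c + (-5
    - 15 * w) * b^2 + (-16 - 17 * w) * b * c + (-6 - 3 * w) * c^2 - 3 * a + (-5 + w) * b + (-1
    + 3 * w) * c + (1 + w)"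

definition B16 :: "complex \<Rightarrow> complex \<Rightarrow> complex \<Rightarrow> complex \<Rightarrow> complex" where
  "B16 w a b c = (1 + w) * a^2 * b + a^2 * c + (2 + w) * a * b^2 + (1 - w) * a * b * c + b^3
    - w * b^2 * c - w * a^2 + (-1 - 4 * w) * a * b + (-2 - 2 * w) * a * c + (-2 - 3 * w) * b^2
    + (-2 - w) * b * c - 2 * a + (-2 + w) * b + w * c + (1 + w)"

lemmas B_defs = B8_def B9_def B10_def B11_def B12_def B13_def B14_def B16_def

definition tauB :: "complex \<Rightarrow> complex \<Rightarrow> complex \<Rightarrow> complex \<Rightarrow> nat \<Rightarrow> complex" where
  "tauB w a b c = tau (1 + w) 1 (- w) (- 1 - w) a b c"

lemma tauB_init:
  "n < 5 \<Longrightarrow> tauB w a b c n = 1" "tauB w a b c 5 = a" "tauB w a b c 6 = b" "tauB w a b c 7 = c"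
  unfolding tauB_def by (simp_all add: tau_init)

lemma tauB_rec:
  "tauB w a b c (n + 8) =
     (1 + w) * tauB w a b c (n + 3) * tauB w a b c (n + 4) * tauB w a b c (n + 5)
     + tauB w a b c n * tauB w a b c (n + 4) * tauB w a b c (n + 6)
     - w * tauB w a b c n * tauB w a b c (n + 1) * tauB w a b c (n + 7)
     - (1 + w) * tauB w a b c n * tauB w a b c (n + 1) * tauB w a b c (n + 2)
         * tauB w a b c (n + 3) * tauB w a b c (n + 4)"
  unfolding tauB_def tau_rec by (simp add: algebra_simps)

lemma tauB_values:
  assumes w: "w\<^sup>2 + w + 1 = 0"
  shows "tauB w a b c 8 = B8 w a b c" "tauB w a b c 9 = B9 w a b c" "tauB w a b c 10 = B10 w a b c"
    "tauB w a b c 11 = B11 w a b c" "tauB w a b c 12 = B12 w a b c" "tauB w a b c 13 = B13 w a b c"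
    "tauB w a b c 14 = B14 w a b c"
proof -
  let ?T = "tauB w a b c"
  show T8: "?T 8 = B8 w a b c"
    by (simp add: tauB_rec [of _ _ _ _ 0, simplified] tauB_init B8_def)
  show T9: "?T 9 = B9 w a b c"
    using w by (simp add: tauB_rec [of _ _ _ _ 1, simplified] tauB_init T8) (unfold B_defs, algebra)
  show T10: "?T 10 = B10 w a b c"
    using w by (simp add: tauB_rec [of _ _ _ _ 2, simplified] tauB_init T8 T9)
      (unfold B_defs, algebra)
  show T11: "?T 11 = B11 w a b c"
    using w by (simp add: tauB_rec [of _ _ _ _ 3, simplified] tauB_init T8 T9 T10)
      (unfold B_defs, algebra)
  show T12: "?T 12 = B12 w a b c"
    using w by (simp add: tauB_rec [of _ _ _ _ 4, simplified] tauB_init T8 T9 T10 T11)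
      (unfold B_defs, algebra)
  show T13: "?T 13 = B13 w a b c"
    using w by (simp add: tauB_rec [of _ _ _ _ 5, simplified] tauB_init T8 T9 T10 T11 T12)
      (unfold B_defs, algebra)
  show T14: "?T 14 = B14 w a b c"
    using w by (simp add: tauB_rec [of _ _ _ _ 6, simplified] tauB_init T8 T9 T10 T11 T12 T13)
      (unfold B_defs, algebra)
qed

lemma tauB_return:
  assumes w: "w\<^sup>2 + w + 1 = 0"
  shows "tauB w a b c 17 = a * tauB w a b c 12 * tauB w a b c 13 * tauB w a b c 14"
proof -
  let ?T = "tauB w a b c"
  note T = tauB_values [OF w, of a b c]
  have T15: "?T 15 = B13 w a b c * B12 w a b c"
    using w by (simp add: tauB_rec [of _ _ _ _ 7, simplified] tauB_init T) (unfold B_defs, algebra)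
  have "B16 w a b c * B13 w a b c = (1 + w) * B11 w a b c * B13 w a b c + B8 w a b c * B14 w a b c
      - w * B8 w a b c * B9 w a b c * B13 w a b c
      - (1 + w) * B8 w a b c * B9 w a b c * B10 w a b c * B11 w a b c"
    using w unfolding B_defs by algebra
  then have T16: "?T 16 = B16 w a b c * B12 w a b c * B13 w a b c"
    by (simp add: tauB_rec [of _ _ _ _ 8, simplified] T T15) algebra
  have "a * B14 w a b c = (1 + w) * B14 w a b c + B9 w a b c * B13 w a b c
      - w * B9 w a b c * B10 w a b c * B16 w a b c
      - (1 + w) * B9 w a b c * B10 w a b c * B11 w a b c"
    using w unfolding B_defs by algebra
  then have "?T 17 = a * B12 w a b c * B13 w a b c * B14 w a b c"
    by (simp add: tauB_rec [of _ _ _ _ 9, simplified] T T15 T16) algebra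
  then show ?thesis
    by (simp add: T)
qed

lemma rec3_periodic_family_B:
  fixes s :: complex
  assumes "s\<^sup>2 = -3"
  shows "rec3_periodic (\<lambda>a b c. (1 + s) * a + 2 * b + (1 - s) * c + (-1 - s)) (\<lambda>a b c. 2 * a) 12"
proof -
  define w where "w = (s - 1) / 2"
  have s: "s = 2 * w + 1"
    unfolding w_def by (simp add: field_simps)
  have w: "w\<^sup>2 + w + 1 = 0"
    using assms unfolding s by algebra
  show ?thesis
  proof (rule rec3_periodic_linear
      [where \<alpha> = "1 + w" and \<beta> = 1 and \<gamma> = "- w" and \<delta> = "- 1 - w"])
    show "(1 + s) * a + 2 * b + (1 - s) * c + (-1 - s)
        = 2 * ((1 + w) * a + 1 * b + - w * c + (- 1 - w))" for a b c
      unfolding s by algebra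
    show "- 1 - w \<noteq> 0"
    proof
      assume "- 1 - w = 0"
      then have "w = - 1"
        by (simp add: algebra_simps)
      with w show False
        by simp
    qed
    show "tau (1 + w) 1 (- w) (- 1 - w) a b c (12 + 5)
        = a * tau (1 + w) 1 (- w) (- 1 - w) a b c 12 * tau (1 + w) 1 (- w) (- 1 - w) a b c (12 + 1)
            * tau (1 + w) 1 (- w) (- 1 - w) a b c (12 + 2)" for a b c
      using tauB_return [OF w, unfolded tauB_def] by simp
  qed
qed

theorem mainTheorem3:
  shows "rec3_periodic (\<lambda>a b c. -1 - 2*a + 2*b - 2*c) (\<lambda>a b c. 2*a) 12
       \<and> rec3_periodic
           (\<lambda>a b c. (1 + complex_of_real (sqrt 3) * \<i>) * a + 2*b
                   + (1 - complex_of_real (sqrt 3) * \<i>) * c + (-1 - complex_of_real (sqrt 3) * \<i>))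
           (\<lambda>a b c. 2*a) 12
       \<and> rec3_periodic
           (\<lambda>a b c. (1 - complex_of_real (sqrt 3) * \<i>) * a + 2*b
                   + (1 + complex_of_real (sqrt 3) * \<i>) * c + (-1 + complex_of_real (sqrt 3) * \<i>))
           (\<lambda>a b c. 2*a) 12"
proof -
  let ?s = "complex_of_real (sqrt 3) * \<i>"
  have "(complex_of_real (sqrt 3))\<^sup>2 = 3"
    by (simp flip: of_real_power)
  then have s: "?s\<^sup>2 = -3" "(- ?s)\<^sup>2 = -3"
    by (simp_all add: power_mult_distrib)
  have "rec3_periodic (\<lambda>a b c. (1 - ?s) * a + 2*b + (1 + ?s) * c + (-1 + ?s)) (\<lambda>a b c. 2*a) 12"
    using rec3_periodic_family_B [OF s(2)] by (simp only: add_uminus_conv_diff diff_minus_eq_add)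
  then show ?thesis
    using rec3_periodic_family_A rec3_periodic_family_B [OF s(1)] by blast
qed

end
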